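(* Let $P$ be a nonzero $n\times n$ real symmetric positive semidefinite matrix and let $\theta$ satisfy $0<\theta<\lambda_1(P)^{-1}$. Then: (1) the function $\vartheta\mapsto\gamma(\vartheta,P)$ is monotone increasing on $[0,\lambda_1(P)^{-1})$; (2) $\gamma(\theta,P)>0$; (3) if $Q$ is a symmetric positive semidefinite matrix with $P\succeq Q$, then $\gamma(\theta,P)\ge\gamma(\theta,Q)$.
   Context: $\lambda_1(P)$ is the largest eigenvalue of $P$; $\succeq$ is the Loewner order. For a symmetric matrix $P$ and real $\theta$ with $I-\theta P\succ0$, $\gamma(\theta,P)=\tfrac12\big[\log\det(I-\theta P)+\mathrm{tr}((I-\theta P)^{-1})-n\big]$. *)

theory Defs
  imports "HOL-Analysis.Analysis"
begin

definition sym_matrix :: "real^'n^'n \<Rightarrow> bool" where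
  "sym_matrix A \<longleftrightarrow> transpose A = A"

definition psd :: "real^'n^'n \<Rightarrow> bool" where
  "psd A \<longleftrightarrow> (\<forall>x. 0 \<le> x \<bullet> (A *v x))"

definition pd :: "real^'n^'n \<Rightarrow> bool" where
  "pd A \<longleftrightarrow> (\<forall>x. x \<noteq> 0 \<longrightarrow> 0 < x \<bullet> (A *v x))"

definition loewner_ge :: "real^'n^'n \<Rightarrow> real^'n^'n \<Rightarrow> bool" where
  "loewner_ge P Q \<longleftrightarrow> psd (P - Q)"

definition lambda_max :: "real^'n^'n \<Rightarrow> real" where
  "lambda_max A = Max {c. \<exists>v. v \<noteq> 0 \<and> A *v v = c *\<^sub>R v}"

definition gamma :: "real \<Rightarrow> real^'n^'n \<Rightarrow> real" where
  "gamma \<theta> P = (let M = mat 1 - \<theta> *\<^sub>R P in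
     (ln (det M) + trace (matrix_inv M) - real CARD('n)) / 2)"

end

theory Submission
  imports Defs
begin

text \<open>Write P = U diag(d) U^T with U orthogonal. Then gamma(t, P) = 1/2 sum_k f(t d_k) with
  f(x) = ln(1 - x) + 1/(1 - x) - 1 (called gamma_term below), and f'(x) = x/(1 - x)^2 shows
  that f vanishes at 0 and is strictly increasing and convex on [0, 1); this gives (1) and (2).
  For (3) write also Q = V diag(e) V^T and W = V^T U. Since P - Q is positive semidefinite, e_j is
  at most the j-th diagonal entry q_j = sum_i W_ji^2 d_i of V^T P V, and the weights W_ji^2 form a
  doubly stochastic matrix. Monotonicity of f and Jensen's inequality then give
  sum_j f(t e_j) <= sum_j f(t q_j) <= sum_i f(t d_i).\<close>

section \<open>Spectral theorem for real symmetric matrices\<close>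

lemma sym_matrix_inner_mv:
  fixes A :: "real^'n^'n"
  assumes "sym_matrix A"
  shows "x \<bullet> (A *v y) = (A *v x) \<bullet> y"
  using assms by (metis dot_lmul_matrix sym_matrix_def transpose_matrix_vector)

lemma quadratic_nonpos_imp_linear_coeff_zero:
  fixes b c :: real
  assumes "\<And>t. 2 * t * b + t\<^sup>2 * c \<le> 0"
  shows "b = 0"
proof -
  define s where "s = 1 / (\<bar>c\<bar> + 1)"
  have s: "s > 0" "s * \<bar>c\<bar> < 1" unfolding s_def by (auto simp: field_simps)
  have "- \<bar>c\<bar> \<le> c" by simp
  then have "2 + s * c > 0"
    using s mult_left_mono[of "- \<bar>c\<bar>" c s] by simp
  moreover have "s * b\<^sup>2 * (2 + s * c) \<le> 0"
    using assms[of "s * b"] by (simp add: power2_eq_square algebra_simps)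
  ultimately have "b\<^sup>2 \<le> 0" using s by (simp add: mult_le_0_iff zero_less_mult_iff)
  then show ?thesis by simp
qed

text \<open>A maximiser u of the quadratic form on the unit sphere of S is an eigenvector: comparing
  with u + t w for w in S shows that A u - l u is orthogonal to S.\<close>
lemma sym_matrix_unit_eigenvector_in_invariant_subspace:
  fixes A :: "real^'n^'n"
  assumes sym: "sym_matrix A" and S: "subspace S" "S \<noteq> {0}"
    and inv: "\<And>x. x \<in> S \<Longrightarrow> A *v x \<in> S"
  obtains u where "u \<in> S" "norm u = 1" "A *v u = (u \<bullet> (A *v u)) *\<^sub>R u"
proof -
  let ?q = "\<lambda>x. x \<bullet> (A *v x)"
  let ?K = "S \<inter> sphere 0 1"
  obtain x where "x \<in> S" "x \<noteq> 0" using S subspace_0 by blast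
  then have "x /\<^sub>R norm x \<in> ?K" using S by (auto simp: subspace_mul)
  then have "?K \<noteq> {}" by blast
  moreover have "compact ?K" using S by (simp add: closed_Int_compact closed_subspace)
  moreover have "continuous_on ?K ?q"
    by (intro continuous_intros linear_continuous_on matrix_vector_mul_bounded_linear)
  ultimately obtain u where u: "u \<in> ?K" and max: "\<And>y. y \<in> ?K \<Longrightarrow> ?q y \<le> ?q u"
    using continuous_attains_sup[of ?K ?q] by blast
  define l where "l = ?q u"
  have uS: "u \<in> S" and uu: "u \<bullet> u = 1" using u by (auto simp: norm_eq_1)
  have bound: "?q y \<le> l * (y \<bullet> y)" if "y \<in> S" for y
  proof (cases "y = 0")
    case False
    have "y /\<^sub>R norm y \<in> ?K" using that False S by (auto simp: subspace_mul)
    then have "?q (y /\<^sub>R norm y) \<le> l" using max l_def by blast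
    then have "inverse (norm y) * (inverse (norm y) * ?q y) \<le> l"
      by (simp add: matrix_vector_mult_scaleR)
    then have "?q y \<le> l * (norm y * norm y)" using False by (simp add: field_simps)
    then show ?thesis by (simp add: dot_square_norm power2_eq_square)
  qed simp
  have orth: "w \<bullet> (A *v u - l *\<^sub>R u) = 0" if w: "w \<in> S" for w
  proof (rule quadratic_nonpos_imp_linear_coeff_zero[where c = "?q w - l * (w \<bullet> w)"])
    fix t :: real
    have "u + t *\<^sub>R w \<in> S" using uS w S by (simp add: subspace_add subspace_mul)
    from bound[OF this]
    have "(u + t *\<^sub>R w) \<bullet> (A *v (u + t *\<^sub>R w)) \<le> l * ((u + t *\<^sub>R w) \<bullet> (u + t *\<^sub>R w))" .
    moreover have "u \<bullet> (A *v w) = w \<bullet> (A *v u)"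
      using sym_matrix_inner_mv[OF sym, of u w] by (simp add: inner_commute)
    ultimately have "?q u + 2 * t * (w \<bullet> (A *v u)) + t\<^sup>2 * ?q w
        \<le> l * (1 + 2 * t * (w \<bullet> u) + t\<^sup>2 * (w \<bullet> w))"
      using uu
      by (simp add: matrix_vector_right_distrib matrix_vector_mult_scaleR inner_add_left
          inner_add_right power2_eq_square inner_commute[of u w]) (simp add: algebra_simps)
    then have "2 * t * (w \<bullet> (A *v u)) - 2 * t * l * (w \<bullet> u) + t\<^sup>2 * (?q w - l * (w \<bullet> w)) \<le> 0"
      unfolding l_def by (simp add: algebra_simps)
    then show "2 * t * (w \<bullet> (A *v u - l *\<^sub>R u)) + t\<^sup>2 * (?q w - l * (w \<bullet> w)) \<le> 0"
      by (simp add: inner_diff_right right_diff_distrib)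
  qed
  have "A *v u - l *\<^sub>R u \<in> S" using inv[OF uS] uS S by (simp add: subspace_diff subspace_mul)
  from orth[OF this] have "A *v u = l *\<^sub>R u" by simp
  then show thesis using that uS u l_def by auto
qed

lemma sym_matrix_orthonormal_eigenbasis_of_invariant_subspace:
  fixes A :: "real^'n^'n"
  assumes sym: "sym_matrix A"
  shows "subspace S \<Longrightarrow> (\<And>x. x \<in> S \<Longrightarrow> A *v x \<in> S) \<Longrightarrow> \<exists>B. B \<subseteq> S \<and> pairwise orthogonal B \<and>
     (\<forall>b\<in>B. norm b = 1 \<and> A *v b = (b \<bullet> (A *v b)) *\<^sub>R b) \<and> span B = S"
proof (induction "dim S" arbitrary: S rule: less_induct)
  case less
  show ?case
  proof (cases "S = {0}")
    case True
    then show ?thesis by (intro exI[of _ "{}"]) auto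
  next
    case False
    obtain u where u: "u \<in> S" "norm u = 1" "A *v u = (u \<bullet> (A *v u)) *\<^sub>R u"
      using sym_matrix_unit_eigenvector_in_invariant_subspace[OF sym less.prems(1) False] less.prems(2)
      by blast
    have uu: "u \<bullet> u = 1" using u(2) by (simp add: norm_eq_1)
    define S' where "S' = S \<inter> {x. u \<bullet> x = 0}"
    have sub: "subspace S'" unfolding S'_def using less.prems(1) by (intro subspace_inter subspace_hyperplane)
    have inv: "A *v x \<in> S'" if "x \<in> S'" for x
    proof -
      have "u \<bullet> (A *v x) = (A *v u) \<bullet> x" by (rule sym_matrix_inner_mv[OF sym])
      also have "\<dots> = 0" using that unfolding S'_def by (subst u(3)) simp
      finally show ?thesis using that less.prems(2) unfolding S'_def by auto
    qed
    have "u \<notin> S'" using uu unfolding S'_def by auto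
    then have "S' \<subset> S" using u(1) unfolding S'_def by blast
    then have "dim S' < dim S" using sub less.prems(1) by (metis dim_psubset span_eq_iff)
    from less.hyps[OF this sub inv] obtain B' where B': "B' \<subseteq> S'" "pairwise orthogonal B'"
      "\<forall>b\<in>B'. norm b = 1 \<and> A *v b = (b \<bullet> (A *v b)) *\<^sub>R b" "span B' = S'" by blast
    show ?thesis
    proof (intro exI[of _ "insert u B'"] conjI)
      show "insert u B' \<subseteq> S" using u B'(1) unfolding S'_def by auto
      show "pairwise orthogonal (insert u B')"
        using B'(1,2) uu unfolding S'_def pairwise_insert by (auto simp: orthogonal_def inner_commute)
      show "\<forall>b\<in>insert u B'. norm b = 1 \<and> A *v b = (b \<bullet> (A *v b)) *\<^sub>R b" using u B'(3) by auto
      show "span (insert u B') = S"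
      proof
        show "span (insert u B') \<subseteq> S"
          using u B'(1) less.prems(1) unfolding S'_def by (intro span_minimal) auto
        show "S \<subseteq> span (insert u B')"
        proof
          fix x assume x: "x \<in> S"
          have "x - (u \<bullet> x) *\<^sub>R u \<in> S'"
            unfolding S'_def using x u(1) less.prems(1) uu
            by (auto simp: subspace_diff subspace_mul inner_diff_right)
          then have "x - (u \<bullet> x) *\<^sub>R u \<in> span (insert u B')"
            using B'(4) span_mono[of B' "insert u B'"] by auto
          then show "x \<in> span (insert u B')"
            by (metis diff_add_cancel insertI1 span_add span_base span_mul)
        qed
      qed
    qed
  qed
qed

definition diag_mat :: "('n \<Rightarrow> real) \<Rightarrow> real^'n^'n" where
  "diag_mat d = (\<chi> i j. if i = j then d i else 0)"

lemma matrix_mul_diag_mat_nth: "(M ** diag_mat d) $ i $ k = M $ i $ k * d k"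
  by (simp add: matrix_matrix_mult_def diag_mat_def if_distrib if_distribR cong: if_cong)

theorem sym_matrix_spectral_decomposition:
  fixes A :: "real^'n^'n"
  assumes "sym_matrix A"
  obtains U d where "orthogonal_matrix U" "A = U ** diag_mat d ** transpose U"
proof -
  obtain B where B: "pairwise orthogonal B" "\<forall>b\<in>B. norm b = 1 \<and> A *v b = (b \<bullet> (A *v b)) *\<^sub>R b"
      "span B = UNIV"
    using sym_matrix_orthonormal_eigenbasis_of_invariant_subspace[OF assms, of UNIV] by auto
  have "independent B" using B(1,2) pairwise_orthogonal_independent by force
  moreover have "dim (UNIV :: (real^'n) set) = CARD('n)" by (metis dim_vec_eq vec_dim_card)
  ultimately have "finite B" "card B = CARD('n)"
    using indep_card_eq_dim_span B(3) by metis+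
  then obtain h where h: "bij_betw h (UNIV :: 'n set) B"
    using finite_same_card_bij[of "UNIV :: 'n set" B] by auto
  have hB: "h j \<in> B" for j using h by (auto simp: bij_betw_def)
  define U :: "real^'n^'n" where "U = (\<chi> i j. h j $ i)"
  define d where "d j = h j \<bullet> (A *v h j)" for j
  have col: "column j U = h j" for j by (simp add: U_def column_def vec_eq_iff)
  have "orthogonal_matrix U"
    unfolding orthogonal_matrix_orthonormal_columns col
    using hB B(1,2) h by (auto simp: pairwise_def bij_betw_def inj_on_def) blast
  moreover have "A ** U = U ** diag_mat d"
  proof -
    have "(A ** U) $ i $ j = (A *v h j) $ i" for i j
      by (simp add: matrix_matrix_mult_def matrix_vector_mult_def U_def)
    then show ?thesis
      using B(2) hB by (simp add: vec_eq_iff matrix_mul_diag_mat_nth d_def U_def mult.commute)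
  qed
  then have "A = U ** diag_mat d ** transpose U"
    using \<open>orthogonal_matrix U\<close> by (metis matrix_mul_assoc matrix_mul_rid orthogonal_matrix_def)
  ultimately show thesis using that by blast
qed

section \<open>Orthogonal conjugates of diagonal matrices\<close>

lemma matrix_mul_diff_ldistrib:
  fixes A :: "'a::ring_1^'n^'m"
  shows "A ** (B - C) = A ** B - A ** C"
  by (simp add: matrix_matrix_mult_def vec_eq_iff sum_subtractf algebra_simps)

lemma matrix_mul_diff_rdistrib:
  fixes A :: "'a::ring_1^'n^'m"
  shows "(A - B) ** C = A ** C - B ** C"
  by (simp add: matrix_matrix_mult_def vec_eq_iff sum_subtractf algebra_simps)

lemma matrix_inv_eqI:
  fixes A :: "'a::field^'n^'n"
  assumes "A ** N = mat 1"
  shows "matrix_inv A = N"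
  unfolding matrix_inv_def
proof (rule some_equality)
  show "A ** N = mat 1 \<and> N ** A = mat 1" using assms matrix_left_right_inverse by blast
next
  fix N' assume N': "A ** N' = mat 1 \<and> N' ** A = mat 1"
  have "N' = N' ** (A ** N)" using assms by simp
  also have "\<dots> = (N' ** A) ** N" by (rule matrix_mul_assoc)
  also have "\<dots> = N" using N' by simp
  finally show "N' = N" .
qed

lemma diag_mat_mult: "diag_mat a ** diag_mat b = diag_mat (\<lambda>i. a i * b i)"
  by (simp add: vec_eq_iff matrix_mul_diag_mat_nth) (simp add: diag_mat_def)

lemma diag_mat_one: "diag_mat (\<lambda>_. 1) = mat 1"
  by (simp add: diag_mat_def mat_def)

lemma diag_mat_mv_nth: "(diag_mat d *v x) $ i = d i * x $ i"
  by (simp add: matrix_vector_mult_def diag_mat_def if_distrib if_distribR cong: if_cong)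

lemma det_diag_mat: "det (diag_mat d) = prod d UNIV"
  by (subst det_diagonal) (auto simp: diag_mat_def)

lemma trace_diag_mat: "trace (diag_mat d) = sum d UNIV"
  by (simp add: trace_def diag_mat_def)

lemma det_orthogonal_conj:
  fixes U :: "real^'n^'n"
  assumes "orthogonal_matrix U"
  shows "det (U ** M ** transpose U) = det M"
  using det_orthogonal_matrix[OF assms] by (auto simp: det_mul det_transpose)

lemma trace_orthogonal_conj:
  fixes U :: "real^'n^'n"
  assumes "orthogonal_matrix U"
  shows "trace (U ** M ** transpose U) = trace M"
proof -
  have "trace (U ** M ** transpose U) = trace ((transpose U ** U) ** M)"
    by (simp add: trace_mul_sym[of "U ** M"] matrix_mul_assoc)
  then show ?thesis using assms by (simp add: orthogonal_matrix_def)
qed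

lemma orthogonal_conj_mult:
  fixes U :: "real^'n^'n"
  assumes "orthogonal_matrix U"
  shows "(U ** A ** transpose U) ** (U ** B ** transpose U) = U ** (A ** B) ** transpose U"
proof -
  have "(U ** A ** transpose U) ** (U ** B ** transpose U) = U ** A ** (transpose U ** U) ** B ** transpose U"
    by (simp add: matrix_mul_assoc)
  also have "\<dots> = U ** (A ** B) ** transpose U"
    using assms by (simp add: orthogonal_matrix_def matrix_mul_assoc)
  finally show ?thesis .
qed

lemma orthogonal_conj_cancel:
  fixes U :: "real^'n^'n"
  assumes "orthogonal_matrix U"
  shows "transpose U ** (U ** M ** transpose U) ** U = M"
proof -
  have "transpose U ** (U ** M ** transpose U) ** U = (transpose U ** U) ** M ** (transpose U ** U)"
    by (simp add: matrix_mul_assoc)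
  then show ?thesis using assms by (simp add: orthogonal_matrix_def)
qed

lemma orthogonal_conj_id_minus:
  fixes U :: "real^'n^'n"
  assumes "orthogonal_matrix U"
  shows "U ** (mat 1 - t *\<^sub>R D) ** transpose U = mat 1 - t *\<^sub>R (U ** D ** transpose U)"
  using assms
  by (simp add: matrix_mul_diff_ldistrib matrix_mul_diff_rdistrib matrix_scalar_ac
      orthogonal_matrix_def flip: scalar_matrix_assoc)

definition eigenvalues :: "real^'n^'n \<Rightarrow> real set" where
  "eigenvalues A = {c. \<exists>v. v \<noteq> 0 \<and> A *v v = c *\<^sub>R v}"

lemma lambda_max_eq_Max_eigenvalues: "lambda_max A = Max (eigenvalues A)"
  by (simp add: lambda_max_def eigenvalues_def)

lemma eigenvalues_orthogonal_conj:
  fixes U :: "real^'n^'n"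
  assumes U: "orthogonal_matrix U"
  shows "eigenvalues (U ** M ** transpose U) = eigenvalues M"
proof -
  have UUt: "U *v (transpose U *v x) = x" and UtU: "transpose U *v (U *v x) = x" for x
    using U by (simp_all add: matrix_vector_mul_assoc orthogonal_matrix_def del: transpose_matrix_vector)
  have conj: "(U ** M ** transpose U) *v v = U *v (M *v (transpose U *v v))" for v
    by (simp add: matrix_vector_mul_assoc matrix_mul_assoc del: transpose_matrix_vector)
  show ?thesis
  proof (intro equalityI subsetI)
    fix c assume "c \<in> eigenvalues (U ** M ** transpose U)"
    then obtain v where v: "v \<noteq> 0" "U *v (M *v (transpose U *v v)) = c *\<^sub>R v"
      by (auto simp: eigenvalues_def conj)
    have "transpose U *v v \<noteq> 0" using v(1) UUt[of v] by auto
    moreover have "M *v (transpose U *v v) = c *\<^sub>R (transpose U *v v)"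
      using arg_cong[OF v(2), of "(*v) (transpose U)"]
      by (simp add: UtU matrix_vector_mult_scaleR del: transpose_matrix_vector)
    ultimately show "c \<in> eigenvalues M" by (auto simp: eigenvalues_def)
  next
    fix c assume "c \<in> eigenvalues M"
    then obtain w where w: "w \<noteq> 0" "M *v w = c *\<^sub>R w" by (auto simp: eigenvalues_def)
    have "U *v w \<noteq> 0" using w(1) UtU[of w] by auto
    moreover have "(U ** M ** transpose U) *v (U *v w) = c *\<^sub>R (U *v w)"
      by (simp add: conj UtU w(2) matrix_vector_mult_scaleR del: transpose_matrix_vector)
    ultimately show "c \<in> eigenvalues (U ** M ** transpose U)" by (auto simp: eigenvalues_def)
  qed
qed

lemma eigenvalues_diag_mat: "eigenvalues (diag_mat d) = range d"
proof (intro equalityI subsetI)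
  fix c assume "c \<in> eigenvalues (diag_mat d)"
  then obtain w where w: "w \<noteq> 0" "diag_mat d *v w = c *\<^sub>R w" by (auto simp: eigenvalues_def)
  from w(1) obtain i where i: "w $ i \<noteq> 0" by (auto simp: vec_eq_iff)
  have "d i * w $ i = c * w $ i" using arg_cong[OF w(2), of "\<lambda>x. x $ i"] by (simp add: diag_mat_mv_nth)
  then show "c \<in> range d" using i by (metis mult_cancel_right rangeI)
next
  fix c assume "c \<in> range d"
  then obtain i where "c = d i" by auto
  then have "diag_mat d *v axis i 1 = c *\<^sub>R axis i 1"
    by (simp add: vec_eq_iff diag_mat_mv_nth axis_def)
  then show "c \<in> eigenvalues (diag_mat d)"
    unfolding eigenvalues_def by (intro CollectI exI[of _ "axis i 1"]) (simp add: axis_eq_0_iff)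
qed

lemma lambda_max_orthogonal_conj_diag:
  fixes U :: "real^'n^'n"
  assumes "orthogonal_matrix U"
  shows "lambda_max (U ** diag_mat d ** transpose U) = Max (range d)"
  by (simp add: lambda_max_eq_Max_eigenvalues eigenvalues_orthogonal_conj[OF assms]
      eigenvalues_diag_mat)

lemma diag_le_lambda_max_orthogonal_conj:
  fixes U :: "real^'n^'n"
  assumes "orthogonal_matrix U"
  shows "d k \<le> lambda_max (U ** diag_mat d ** transpose U)"
  by (simp add: lambda_max_orthogonal_conj_diag[OF assms])

lemma conj_diag_mat_nonzeroE:
  assumes "U ** diag_mat d ** transpose U \<noteq> 0"
  obtains k where "d k \<noteq> 0"
proof -
  have "diag_mat d \<noteq> 0" using assms by auto
  then show thesis using that by (auto simp: diag_mat_def vec_eq_iff split: if_splits)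
qed

lemma matrix_mul_diag_mat_transpose_nth:
  "(W ** diag_mat d ** transpose W) $ j $ j = (\<Sum>i\<in>UNIV. (W $ j $ i)\<^sup>2 * d i)"
  unfolding matrix_matrix_mult_def[of "W ** diag_mat d"]
  by (simp add: matrix_mul_diag_mat_nth transpose_def power2_eq_square mult_ac)

lemma orthogonal_matrix_row_sq_sum:
  fixes W :: "real^'n^'n"
  assumes "orthogonal_matrix W"
  shows "(\<Sum>i\<in>UNIV. (W $ j $ i)\<^sup>2) = 1"
proof -
  have "(W ** transpose W) $ j $ j = 1" using assms by (simp add: orthogonal_matrix_def mat_def)
  then show ?thesis by (simp add: matrix_matrix_mult_def transpose_def power2_eq_square)
qed

lemma orthogonal_matrix_column_sq_sum:
  fixes W :: "real^'n^'n"
  assumes "orthogonal_matrix W"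
  shows "(\<Sum>j\<in>UNIV. (W $ j $ i)\<^sup>2) = 1"
proof -
  have "orthogonal_matrix (transpose W)" using assms by simp
  from orthogonal_matrix_row_sq_sum[OF this, of i] show ?thesis by (simp add: transpose_def)
qed

lemma inner_transpose_mv:
  fixes V :: "real^'n^'m"
  shows "x \<bullet> (transpose V *v y) = (V *v x) \<bullet> y"
  by (metis dot_lmul_matrix inner_commute transpose_matrix_vector)

lemma psd_congruence:
  fixes M V :: "real^'n^'n"
  assumes "psd M"
  shows "psd (transpose V ** M ** V)"
  using assms unfolding psd_def
  by (simp add: inner_transpose_mv matrix_vector_mul_assoc[symmetric] matrix_mul_assoc[symmetric]
      del: transpose_matrix_vector)

lemma psd_diag_nonneg:
  assumes "psd M"
  shows "0 \<le> M $ k $ k"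
proof -
  have "axis k 1 \<bullet> (M *v axis k 1) = M $ k $ k"
    by (simp add: matrix_vector_mult_basis inner_axis' column_def)
  then show ?thesis using assms by (metis psd_def)
qed

lemma psd_if_loewner_ge:
  assumes "psd Q" "loewner_ge P Q"
  shows "psd P"
  using assms unfolding psd_def loewner_ge_def
  by (simp add: matrix_vector_mult_diff_rdistrib inner_diff_right) (meson order_trans)

lemma psd_spectral_decomposition:
  fixes P :: "real^'n^'n"
  assumes "sym_matrix P" "psd P"
  obtains U d where "orthogonal_matrix U" "P = U ** diag_mat d ** transpose U" "\<And>k. 0 \<le> d k"
proof -
  obtain U d where U: "orthogonal_matrix U" and P: "P = U ** diag_mat d ** transpose U"
    using sym_matrix_spectral_decomposition[OF assms(1)] by blast
  have "0 \<le> d k" for k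
    using psd_diag_nonneg[OF psd_congruence[OF assms(2)], of U k] orthogonal_conj_cancel[OF U]
    by (simp add: P diag_mat_def)
  with U P show thesis by (rule that)
qed

lemma lambda_max_pos:
  fixes P :: "real^'n^'n"
  assumes "sym_matrix P" "psd P" "P \<noteq> 0"
  shows "0 < lambda_max P"
proof -
  obtain U d where U: "orthogonal_matrix U" and P: "P = U ** diag_mat d ** transpose U"
    and d: "\<And>k. 0 \<le> d k"
    using psd_spectral_decomposition[OF assms(1,2)] by blast
  from P assms(3) obtain k where "d k \<noteq> 0" using conj_diag_mat_nonzeroE by blast
  then have "0 < d k" using d[of k] by simp
  also have "\<dots> \<le> lambda_max P" unfolding P by (rule diag_le_lambda_max_orthogonal_conj[OF U])
  finally show ?thesis .
qed

lemma loewner_ge_orthogonal_conj_diag_le: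
  fixes U V :: "real^'n^'n"
  assumes U: "orthogonal_matrix U" and V: "orthogonal_matrix V"
    and "loewner_ge (U ** diag_mat d ** transpose U) (V ** diag_mat e ** transpose V)"
  shows "e j \<le> (\<Sum>i\<in>UNIV. ((transpose V ** U) $ j $ i)\<^sup>2 * d i)"
proof -
  let ?P = "U ** diag_mat d ** transpose U" and ?Q = "V ** diag_mat e ** transpose V"
  have "0 \<le> (transpose V ** (?P - ?Q) ** V) $ j $ j"
    using assms(3) unfolding loewner_ge_def by (intro psd_diag_nonneg psd_congruence)
  moreover have "transpose V ** ?P ** V = (transpose V ** U) ** diag_mat d ** transpose (transpose V ** U)"
    by (simp add: matrix_transpose_mul matrix_mul_assoc)
  ultimately show ?thesis
    using orthogonal_conj_cancel[OF V, of "diag_mat e"]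
    by (simp add: matrix_mul_diff_ldistrib matrix_mul_diff_rdistrib matrix_mul_diag_mat_transpose_nth)
      (simp add: diag_mat_def)
qed

section \<open>The function gamma in spectral form\<close>

definition gamma_term :: "real \<Rightarrow> real" where
  "gamma_term x = ln (1 - x) + 1 / (1 - x) - 1"

lemma gamma_term_has_derivative:
  assumes "x < 1"
  shows "(gamma_term has_real_derivative x / (1 - x)\<^sup>2) (at x)"
proof -
  have "((\<lambda>z. ln (1 - z)) has_real_derivative - 1 / (1 - x)) (at x)"
    using assms by (auto intro!: derivative_eq_intros)
  moreover have "((\<lambda>z. 1 / (1 - z)) has_real_derivative 1 / (1 - x)\<^sup>2) (at x)"
    using assms by (auto intro!: derivative_eq_intros simp: power2_eq_square)
  ultimately have "(gamma_term has_real_derivative - 1 / (1 - x) + 1 / (1 - x)\<^sup>2 - 0) (at x)"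
    unfolding gamma_term_def[abs_def] by (intro DERIV_diff DERIV_add DERIV_const)
  moreover have "- 1 / y + 1 / y\<^sup>2 = (1 - y) / y\<^sup>2" if "y \<noteq> 0" for y :: real
    using that by (simp add: field_simps power2_eq_square)
  from this[of "1 - x"] assms have "- 1 / (1 - x) + 1 / (1 - x)\<^sup>2 - 0 = x / (1 - x)\<^sup>2"
    by simp
  ultimately show ?thesis by simp
qed

lemma strict_mono_on_gamma_term: "strict_mono_on {0..<1} gamma_term"
proof (rule strict_mono_onI)
  fix x y :: real assume "x \<in> {0..<1}" "y \<in> {0..<1}" "x < y"
  then have xy: "0 \<le> x" "x < y" "y < 1" by auto
  show "gamma_term x < gamma_term y"
  proof (rule DERIV_pos_imp_increasing_open[OF xy(2)])
    fix z assume "x < z" "z < y"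
    then have "0 < z / (1 - z)\<^sup>2" "z < 1" using xy by auto
    then show "\<exists>D. (gamma_term has_real_derivative D) (at z) \<and> 0 < D"
      using gamma_term_has_derivative by blast
  next
    show "continuous_on {x..y} gamma_term"
    proof (rule DERIV_continuous_on)
      fix z assume "z \<in> {x..y}"
      then have "z < 1" using xy by auto
      then show "(gamma_term has_real_derivative z / (1 - z)\<^sup>2) (at z within {x..y})"
        by (rule has_field_derivative_at_within[OF gamma_term_has_derivative])
    qed
  qed
qed

lemma gamma_term_0: "gamma_term 0 = 0"
  by (simp add: gamma_term_def)

lemma convex_on_gamma_term: "convex_on {0..<1} gamma_term"
proof (rule convex_on_realI[where f' = "\<lambda>x. x / (1 - x)\<^sup>2"])
  show "connected {0..<1::real}" by (simp add: is_interval_connected)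
  show "(gamma_term has_real_derivative x / (1 - x)\<^sup>2) (at x)" if "x \<in> {0..<1}" for x
    using that gamma_term_has_derivative by simp
  show "x / (1 - x)\<^sup>2 \<le> y / (1 - y)\<^sup>2" if "x \<in> {0..<1}" "y \<in> {0..<1}" "x \<le> y" for x y :: real
    using that by (intro frac_le) (auto intro!: power_mono)
qed

lemma convex_on_sum_doubly_stochastic_le:
  fixes c :: "'i::finite \<Rightarrow> 'j::finite \<Rightarrow> real"
  assumes f: "convex_on S f" and x: "\<And>i. x i \<in> S" and c: "\<And>i j. 0 \<le> c i j"
    and rows: "\<And>j. (\<Sum>i\<in>UNIV. c i j) = 1" and cols: "\<And>i. (\<Sum>j\<in>UNIV. c i j) = 1"
  shows "(\<Sum>j\<in>UNIV. f (\<Sum>i\<in>UNIV. c i j * x i)) \<le> (\<Sum>i\<in>UNIV. f (x i))"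
proof -
  have "(\<Sum>j\<in>UNIV. f (\<Sum>i\<in>UNIV. c i j * x i)) \<le> (\<Sum>j\<in>UNIV. \<Sum>i\<in>UNIV. c i j * f (x i))"
    using convex_on_sum[OF finite UNIV_not_empty f rows] c x by (intro sum_mono) simp
  also have "\<dots> = (\<Sum>i\<in>UNIV. (\<Sum>j\<in>UNIV. c i j) * f (x i))"
    by (subst sum.swap) (simp add: sum_distrib_right)
  finally show ?thesis by (simp add: cols)
qed

lemma sum_gamma_term_le_doubly_stochastic:
  fixes c :: "'i::finite \<Rightarrow> 'j::finite \<Rightarrow> real"
  assumes x: "\<And>i. x i \<in> {0..<1}" and y: "\<And>j. 0 \<le> y j" "\<And>j. y j \<le> (\<Sum>i\<in>UNIV. c i j * x i)"
    and c: "\<And>i j. 0 \<le> c i j"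
    and rows: "\<And>j. (\<Sum>i\<in>UNIV. c i j) = 1" and cols: "\<And>i. (\<Sum>j\<in>UNIV. c i j) = 1"
  shows "(\<Sum>j\<in>UNIV. gamma_term (y j)) \<le> (\<Sum>i\<in>UNIV. gamma_term (x i))"
proof -
  have "(\<Sum>i\<in>UNIV. c i j *\<^sub>R x i) \<in> {0..<1}" for j
    by (rule convex_sum) (use rows c x in \<open>auto simp: convex_real_interval\<close>)
  then have "(\<Sum>j\<in>UNIV. gamma_term (y j)) \<le> (\<Sum>j\<in>UNIV. gamma_term (\<Sum>i\<in>UNIV. c i j * x i))"
    using y by (intro sum_mono strict_mono_on_leD[OF strict_mono_on_gamma_term])
      (auto intro: order.strict_trans1)
  also have "\<dots> \<le> (\<Sum>i\<in>UNIV. gamma_term (x i))"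
    using convex_on_sum_doubly_stochastic_le[OF convex_on_gamma_term x c rows cols] .
  finally show ?thesis .
qed

lemma mult_mem_unit_interval:
  fixes t x L :: real
  assumes "0 \<le> t" "t * L < 1" "0 \<le> x" "x \<le> L"
  shows "t * x \<in> {0..<1}"
  using assms mult_left_mono[of x L t] by auto

lemma gamma_orthogonal_conj_diag:
  fixes U :: "real^'n^'n"
  assumes U: "orthogonal_matrix U" and lt: "\<And>k. t * d k < 1"
  shows "gamma t (U ** diag_mat d ** transpose U) = (\<Sum>k\<in>UNIV. gamma_term (t * d k)) / 2"
proof -
  define e where "e k = 1 - t * d k" for k
  have e: "e k > 0" for k using lt[of k] by (simp add: e_def)
  have "mat 1 - t *\<^sub>R diag_mat d = diag_mat e"
    by (simp add: vec_eq_iff mat_def diag_mat_def e_def)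
  then have M: "mat 1 - t *\<^sub>R (U ** diag_mat d ** transpose U) = U ** diag_mat e ** transpose U"
    using orthogonal_conj_id_minus[OF U, of t "diag_mat d"] by simp
  have e_nz: "e k \<noteq> 0" for k using e[of k] by simp
  then have "diag_mat e ** diag_mat (\<lambda>k. inverse (e k)) = diag_mat (\<lambda>_. 1)"
    by (simp add: diag_mat_mult)
  then have "diag_mat e ** diag_mat (\<lambda>k. inverse (e k)) = mat 1"
    by (simp add: diag_mat_one)
  then have "matrix_inv (U ** diag_mat e ** transpose U) = U ** diag_mat (\<lambda>k. inverse (e k)) ** transpose U"
    using U by (intro matrix_inv_eqI) (simp add: orthogonal_conj_mult orthogonal_matrix_def)
  then have "trace (matrix_inv (U ** diag_mat e ** transpose U)) = (\<Sum>k\<in>UNIV. inverse (e k))"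
    using U by (simp add: trace_orthogonal_conj trace_diag_mat)
  moreover have "ln (det (U ** diag_mat e ** transpose U)) = (\<Sum>k\<in>UNIV. ln (e k))"
    using U e_nz by (simp add: det_orthogonal_conj det_diag_mat ln_prod)
  ultimately show ?thesis
    unfolding gamma_def Let_def M
    by (simp add: gamma_term_def e_def sum.distrib sum_subtractf inverse_eq_divide)
qed

lemma gamma_psd_orthogonal_conj_diag:
  fixes U :: "real^'n^'n"
  assumes U: "orthogonal_matrix U" and d: "\<And>k. 0 \<le> d k"
    and t: "0 \<le> t" "t * lambda_max (U ** diag_mat d ** transpose U) < 1"
  shows "gamma t (U ** diag_mat d ** transpose U) = (\<Sum>k\<in>UNIV. gamma_term (t * d k)) / 2"
  using mult_mem_unit_interval[OF t d diag_le_lambda_max_orthogonal_conj[OF U]]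
  by (intro gamma_orthogonal_conj_diag[OF U]) simp

lemma gamma_mono_on:
  fixes P :: "real^'n^'n"
  assumes "sym_matrix P" "psd P"
  shows "mono_on {t. 0 \<le> t \<and> t * lambda_max P < 1} (\<lambda>t. gamma t P)"
proof (rule mono_onI)
  obtain U d where U: "orthogonal_matrix U" and P: "P = U ** diag_mat d ** transpose U"
    and d: "\<And>k. 0 \<le> d k"
    using psd_spectral_decomposition[OF assms] by blast
  fix r s assume r: "r \<in> {t. 0 \<le> t \<and> t * lambda_max P < 1}"
    and s: "s \<in> {t. 0 \<le> t \<and> t * lambda_max P < 1}" and "r \<le> s"
  have "gamma_term (r * d k) \<le> gamma_term (s * d k)" for k
  proof (rule strict_mono_on_leD[OF strict_mono_on_gamma_term])
    show "r * d k \<in> {0..<1}" "s * d k \<in> {0..<1}"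
      using r s mult_mem_unit_interval d diag_le_lambda_max_orthogonal_conj[OF U] unfolding P by auto
    show "r * d k \<le> s * d k" using \<open>r \<le> s\<close> d by (rule mult_right_mono)
  qed
  then show "gamma r P \<le> gamma s P"
    using r s unfolding P by (simp add: gamma_psd_orthogonal_conj_diag[OF U d] sum_mono divide_right_mono)
qed

lemma gamma_pos:
  fixes P :: "real^'n^'n"
  assumes "sym_matrix P" "psd P" "P \<noteq> 0" "0 < t" "t * lambda_max P < 1"
  shows "0 < gamma t P"
proof -
  obtain U d where U: "orthogonal_matrix U" and P: "P = U ** diag_mat d ** transpose U"
    and d: "\<And>k. 0 \<le> d k"
    using psd_spectral_decomposition[OF assms(1,2)] by blast
  from P assms(3) obtain i where "d i \<noteq> 0" using conj_diag_mat_nonzeroE by blast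
  have td: "t * d k \<in> {0..<1}" for k
    using mult_mem_unit_interval assms(4,5) d diag_le_lambda_max_orthogonal_conj[OF U]
    unfolding P by (simp add: less_imp_le)
  have "gamma_term 0 \<le> gamma_term (t * d k)" for k
    using td by (intro strict_mono_on_leD[OF strict_mono_on_gamma_term]) auto
  moreover have "gamma_term 0 < gamma_term (t * d i)"
    using td \<open>d i \<noteq> 0\<close> d[of i] assms(4)
    by (intro strict_mono_onD[OF strict_mono_on_gamma_term]) (auto simp: less_le)
  ultimately have "0 < (\<Sum>k\<in>UNIV. gamma_term (t * d k))"
    by (intro sum_pos2[of UNIV i]) (auto simp: gamma_term_0)
  then show ?thesis
    using assms(4,5) unfolding P by (simp add: gamma_psd_orthogonal_conj_diag[OF U d])
qed

lemma gamma_loewner_mono: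
  fixes P Q :: "real^'n^'n"
  assumes "sym_matrix P" "sym_matrix Q" "psd Q" "loewner_ge P Q"
    and t: "0 \<le> t" "t * lambda_max P < 1"
  shows "gamma t Q \<le> gamma t P"
proof -
  have "psd P" using assms(3,4) by (rule psd_if_loewner_ge)
  obtain U d where U: "orthogonal_matrix U" and P: "P = U ** diag_mat d ** transpose U"
    and d: "\<And>k. 0 \<le> d k"
    using psd_spectral_decomposition[OF assms(1) \<open>psd P\<close>] by blast
  obtain V e where V: "orthogonal_matrix V" and Q: "Q = V ** diag_mat e ** transpose V"
    and e: "\<And>k. 0 \<le> e k"
    using psd_spectral_decomposition[OF assms(2,3)] by blast
  have dL: "d k \<le> lambda_max P" for k
    unfolding P by (rule diag_le_lambda_max_orthogonal_conj[OF U])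
  define W where "W = transpose V ** U"
  have W: "orthogonal_matrix W" unfolding W_def using U V by (simp add: orthogonal_matrix_mul)
  define q where "q j = (\<Sum>i\<in>UNIV. (W $ j $ i)\<^sup>2 * d i)" for j
  have eq: "e j \<le> q j" for j
    unfolding q_def W_def using loewner_ge_orthogonal_conj_diag_le[OF U V] assms(4) P Q by blast
  have "q j \<le> (\<Sum>i\<in>UNIV. (W $ j $ i)\<^sup>2 * lambda_max P)" for j
    unfolding q_def using dL by (intro sum_mono mult_left_mono) auto
  then have "q j \<le> lambda_max P" for j
    by (simp add: orthogonal_matrix_row_sq_sum[OF W] flip: sum_distrib_right)
  then have te: "t * e j \<in> {0..<1}" for j
    using mult_mem_unit_interval[OF t] e eq order_trans by blast
  have "gamma t Q = (\<Sum>j\<in>UNIV. gamma_term (t * e j)) / 2"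
    unfolding Q using te by (intro gamma_orthogonal_conj_diag[OF V]) simp
  also have "\<dots> \<le> (\<Sum>i\<in>UNIV. gamma_term (t * d i)) / 2"
  proof (intro divide_right_mono sum_gamma_term_le_doubly_stochastic)
    show "t * e j \<le> (\<Sum>i\<in>UNIV. (W $ j $ i)\<^sup>2 * (t * d i))" for j
      using mult_left_mono[OF eq[of j] t(1)] by (simp add: q_def sum_distrib_left mult_ac)
  qed (use te mult_mem_unit_interval[OF t d dL] orthogonal_matrix_row_sq_sum[OF W]
      orthogonal_matrix_column_sq_sum[OF W] in auto)
  also have "\<dots> = gamma t P"
    using t unfolding P by (simp add: gamma_psd_orthogonal_conj_diag[OF U d])
  finally show ?thesis .
qed

theorem proposition2:
  fixes P :: "real^'n^'n" and \<theta> :: real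
  assumes "sym_matrix P" and "psd P" and "P \<noteq> 0"
    and "0 < \<theta>" and "\<theta> < inverse (lambda_max P)"
  shows "mono_on {0..<inverse (lambda_max P)} (\<lambda>t. gamma t P)
         \<and> gamma \<theta> P > 0
         \<and> (\<forall>Q :: real^'n^'n. sym_matrix Q \<and> psd Q \<and> loewner_ge P Q \<longrightarrow>
              gamma \<theta> P \<ge> gamma \<theta> Q)"
proof -
  have L: "0 < lambda_max P" using assms(1-3) by (rule lambda_max_pos)
  then have "{0..<inverse (lambda_max P)} \<subseteq> {t. 0 \<le> t \<and> t * lambda_max P < 1}"
    by (auto simp: field_simps)
  moreover have \<theta>: "\<theta> * lambda_max P < 1" using assms(5) L by (simp add: field_simps)
  ultimately show ?thesis
    using mono_on_subset[OF gamma_mono_on[OF assms(1,2)]] gamma_pos[OF assms(1-4) \<theta>]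
      gamma_loewner_mono[OF assms(1) _ _ _ less_imp_le[OF assms(4)] \<theta>]
    by blast
qed

end
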